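(* Let $N\ge2$ be an integer and $u=1/N$. For all real $\sigma\ge0$ and all $x\in[1/N,1]$, \[\Bigl|\sum_{k=0}^{\lfloor\sigma\rfloor}\hat F^k\varphi_0(x)-a(\sigma)\Bigr|\le\frac{N(N-1)}{2},\qquad\text{where } a(\sigma):=\frac{1}{\log N}\sum_{k=0}^{\lfloor\sigma\rfloor}\lambda\bigl(F^{-k}[1/N,1]\bigr).\]
   Context: $\lambda$ is Lebesgue measure; $F$ is the Farey map, $F(x)=x/(1-x)$ for $0\le x\le1/2$, $F(x)=(1-x)/x$ for $1/2<x\le1$. $\mu$ is the measure $d\mu=dx/x$ on $[0,1]$. $\hat F$ is the transfer operator of $F$ with respect to $\mu$, given explicitly by $\hat Ff(x)=\dfrac{f(x/(1+x))+x\,f(1/(1+x))}{1+x}$. $\varphi_0(x):=x$ on $[0,1]$. Note $a(\sigma)$ equals the $\mu$-average of $\sum_{k=0}^{\lfloor\sigma\rfloor}\hat F^k\varphi_0$ over $[1/N,1]$. *)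

theory Defs
  imports "HOL-Analysis.Analysis"
begin

definition farey :: "real \<Rightarrow> real" where
  "farey x = (if x \<le> 1/2 then x / (1 - x) else (1 - x) / x)"

text \<open>Transfer operator of the Farey map with respect to dx/x (explicit formula).\<close>
definition farey_transfer :: "(real \<Rightarrow> real) \<Rightarrow> real \<Rightarrow> real" where
  "farey_transfer f x = (f (x / (1 + x)) + x * f (1 / (1 + x))) / (1 + x)"

definition phi0 :: "real \<Rightarrow> real" where
  "phi0 x = x"

definition a_sigma :: "nat \<Rightarrow> real \<Rightarrow> real" where
  "a_sigma N \<sigma> = (1 / ln (real N)) *
     (\<Sum>k=0..nat \<lfloor>\<sigma>\<rfloor>. measure lborel {x \<in> {0..1}. (farey ^^ k) x \<in> {1 / real N..1}})"

end

theory Submission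
  imports Defs
begin

text \<open>
  Write S_n for the sum of the iterates F^k \<phi>0, k \<le> n, of the transfer operator F. Since
  S_(n+1) = \<phi>0 + F S_n, the substitution S_n(x) = W_n(1/x) - 1/x turns the recursion into
  W_(n+1) = T W_n with W_0(t) = t + 1/t and (T W)(t) = (t W(t+1) + W(1+1/t)) / (t+1).
  A computation with first and second derivatives shows that T preserves the functions that are
  nondecreasing, convex and 1-Lipschitz on [1,\<infinity>); hence S_n takes values in
  [W_n(1) - N, W_n(1) - 1] on [1/N,1].
  On the other hand F^k \<phi>0(x) = x \<rho>_k(x), where \<rho>_k is the density of the image of Lebesgue
  measure under the k-th iterate of the Farey map. So a(\<sigma>) is the average of S_n with respect to
  dy / (y log N) on [1/N,1] and lies in the same interval, and the difference is at most
  N - 1 \<le> N(N-1)/2.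
\<close>

definition recip_step :: "(real \<Rightarrow> real) \<Rightarrow> real \<Rightarrow> real" where
  "recip_step V t = (t * V (t + 1) + V (1 + 1/t)) / (t + 1)"

definition recip_step_deriv :: "(real \<Rightarrow> real) \<Rightarrow> (real \<Rightarrow> real) \<Rightarrow> real \<Rightarrow> real" where
  "recip_step_deriv V V' t =
     (V (t + 1) - V (1 + 1/t)) / (t + 1)^2 + t * V' (t + 1) / (t + 1) - V' (1 + 1/t) / (t^2 * (t + 1))"

definition recip_step_deriv2 ::
    "(real \<Rightarrow> real) \<Rightarrow> (real \<Rightarrow> real) \<Rightarrow> (real \<Rightarrow> real) \<Rightarrow> real \<Rightarrow> real" where
  "recip_step_deriv2 V V' V'' t =
     (V' (t + 1) + V' (1 + 1/t) / t^2) / (t + 1)^2 - 2 * (V (t + 1) - V (1 + 1/t)) / (t + 1)^3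
     + V' (t + 1) / (t + 1)^2 + t * V'' (t + 1) / (t + 1)
     + V'' (1 + 1/t) / (t^4 * (t + 1)) + V' (1 + 1/t) * (3 * t + 2) / (t^3 * (t + 1)^2)"

lemma DERIV_comp_shift:
  assumes "\<forall>u>0. (V has_real_derivative V' u) (at u)" and "t > 0"
  shows "((\<lambda>s. V (s + 1)) has_real_derivative V' (t + 1)) (at t)"
proof -
  have "(V has_real_derivative V' (t + 1)) (at (t + 1))"
    using assms by simp
  then have "((\<lambda>s. V (s + 1)) has_real_derivative V' (t + 1) * 1) (at t)"
    by (rule DERIV_chain2) (auto intro!: derivative_eq_intros)
  then show ?thesis
    by simp
qed

lemma DERIV_comp_recip_shift:
  assumes "\<forall>u>0. (V has_real_derivative V' u) (at u)" and "t > 0"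
  shows "((\<lambda>s. V (1 + 1/s)) has_real_derivative - V' (1 + 1/t) / t^2) (at t)"
proof -
  have "(V has_real_derivative V' (1 + 1/t)) (at (1 + 1/t))"
    using assms by (simp add: add_pos_pos)
  then have "((\<lambda>s. V (1 + 1/s)) has_real_derivative V' (1 + 1/t) * (- 1/t^2)) (at t)"
    by (rule DERIV_chain2) (use assms(2) in \<open>auto intro!: derivative_eq_intros simp: power2_eq_square\<close>)
  then show ?thesis
    by simp
qed

lemma DERIV_recip_step:
  assumes V: "\<forall>u>0. (V has_real_derivative V' u) (at u)" and t: "t > 0"
  shows "(recip_step V has_real_derivative recip_step_deriv V V' t) (at t)"
  unfolding recip_step_def [abs_def]
proof (rule DERIV_cong)
  show "((\<lambda>s. (s * V (s + 1) + V (1 + 1/s)) / (s + 1)) has_real_derivative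
      ((V (t + 1) + V' (t + 1) * t - V' (1 + 1/t) / t^2) * (t + 1)
        - (t * V (t + 1) + V (1 + 1/t))) / (t + 1)^2) (at t)"
    using t DERIV_comp_shift [OF V t] DERIV_comp_recip_shift [OF V t]
    by (auto intro!: derivative_eq_intros simp: power2_eq_square)
  have "((a + p * t - q / t^2) * (t + 1) - (t * a + b)) / (t + 1)^2
      = (a - b) / (t + 1)^2 + t * p / (t + 1) - q / (t^2 * (t + 1))" for a b p q
    using t by (simp add: divide_simps) (simp add: algebra_simps power2_eq_square)
  then show "((V (t + 1) + V' (t + 1) * t - V' (1 + 1/t) / t^2) * (t + 1)
        - (t * V (t + 1) + V (1 + 1/t))) / (t + 1)^2 = recip_step_deriv V V' t"
    unfolding recip_step_deriv_def by simp
qed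

lemma DERIV_recip_step_deriv:
  assumes V: "\<forall>u>0. (V has_real_derivative V' u) (at u)"
    and V': "\<forall>u>0. (V' has_real_derivative V'' u) (at u)" and t: "t > 0"
  shows "(recip_step_deriv V V' has_real_derivative recip_step_deriv2 V V' V'' t) (at t)"
  unfolding recip_step_deriv_def [abs_def]
proof (rule DERIV_cong)
  show "((\<lambda>s. (V (s + 1) - V (1 + 1/s)) / (s + 1)^2 + s * V' (s + 1) / (s + 1)
            - V' (1 + 1/s) / (s^2 * (s + 1))) has_real_derivative
      ((V' (t + 1) + V' (1 + 1/t) / t^2) * (t + 1)^2 - (V (t + 1) - V (1 + 1/t)) * (2 * (t + 1)))
        / ((t + 1)^2)^2
      + ((V' (t + 1) + t * V'' (t + 1)) * (t + 1) - t * V' (t + 1)) / (t + 1)^2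
      - (- V'' (1 + 1/t) / t^2 * (t^2 * (t + 1)) - V' (1 + 1/t) * (3 * t^2 + 2 * t))
        / (t^2 * (t + 1))^2) (at t)"
    using t DERIV_comp_shift [OF V t] DERIV_comp_recip_shift [OF V t]
      DERIV_comp_shift [OF V' t] DERIV_comp_recip_shift [OF V' t]
    by (auto intro!: derivative_eq_intros simp: power2_eq_square) (simp_all add: algebra_simps)
  have nonzero: "t + 1 \<noteq> 0"
    using t by auto
  have first: "((p + q / t^2) * u^2 - d * (2 * u)) / (u^2)^2 = (p + q / t^2) / u^2 - 2 * d / u^3"
    if "u \<noteq> 0" for u p q d :: real
    using that by (simp add: field_simps power2_eq_square power3_eq_cube)
  have second: "((p + t * p') * (t + 1) - t * p) / (t + 1)^2 = p / (t + 1)^2 + t * p' / (t + 1)"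
    for p p' :: real
    using t by (simp add: divide_simps) (simp add: algebra_simps power2_eq_square)
  have third: "(- q' / t^2 * (t^2 * u) - q * (3 * t^2 + 2 * t)) / (t^2 * u)^2
      = - (q' / (t^4 * u) + q * (3 * t + 2) / (t^3 * u^2))"
    if "u \<noteq> 0" for u q q' :: real
    using that t by (simp add: field_simps power2_eq_square power3_eq_cube eval_nat_numeral)
  show "((V' (t + 1) + V' (1 + 1/t) / t^2) * (t + 1)^2 - (V (t + 1) - V (1 + 1/t)) * (2 * (t + 1)))
        / ((t + 1)^2)^2
      + ((V' (t + 1) + t * V'' (t + 1)) * (t + 1) - t * V' (t + 1)) / (t + 1)^2
      - (- V'' (1 + 1/t) / t^2 * (t^2 * (t + 1)) - V' (1 + 1/t) * (3 * t^2 + 2 * t))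
        / (t^2 * (t + 1))^2 = recip_step_deriv2 V V' V'' t"
    unfolding recip_step_deriv2_def
    by (simp only: first second third nonzero not_False_eq_True)
qed

definition mono_convex_1lip :: "(real \<Rightarrow> real) \<Rightarrow> (real \<Rightarrow> real) \<Rightarrow> (real \<Rightarrow> real) \<Rightarrow> bool" where
  "mono_convex_1lip V V' V'' \<longleftrightarrow>
     (\<forall>u>0. (V has_real_derivative V' u) (at u) \<and> (V' has_real_derivative V'' u) (at u)) \<and>
     (\<forall>u\<ge>1. 0 \<le> V' u \<and> V' u \<le> 1 \<and> 0 \<le> V'' u)"

lemma recip_shift_bounds:
  fixes t :: real
  assumes "1 \<le> t"
  shows "1 \<le> 1 + 1/t" "1 + 1/t \<le> t + 1"
proof -
  have "0 \<le> 1/t" "1/t \<le> 1"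
    using assms by auto
  then show "1 \<le> 1 + 1/t" "1 + 1/t \<le> t + 1"
    using assms by linarith+
qed

context
  fixes V V' V'' :: "real \<Rightarrow> real"
  assumes V: "mono_convex_1lip V V' V''"
begin

lemma mono_convex_1lip_DERIV:
  "\<forall>u>0. (V has_real_derivative V' u) (at u)" "\<forall>u>0. (V' has_real_derivative V'' u) (at u)"
  using V unfolding mono_convex_1lip_def by auto

lemma mono_convex_1lip_bounds:
  assumes "1 \<le> u"
  shows "0 \<le> V' u" "V' u \<le> 1" "0 \<le> V'' u"
  using V assms unfolding mono_convex_1lip_def by auto

lemma mono_convex_1lip_deriv_mono:
  assumes "1 \<le> a" "a \<le> b"
  shows "V' a \<le> V' b"
  by (rule deriv_nonneg_imp_mono [of a b V' V''])
    (use assms mono_convex_1lip_DERIV mono_convex_1lip_bounds in auto)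

lemma mono_convex_1lip_mono:
  assumes "1 \<le> a" "a \<le> b"
  shows "V a \<le> V b"
  by (rule deriv_nonneg_imp_mono [of a b V V'])
    (use assms mono_convex_1lip_DERIV mono_convex_1lip_bounds in auto)

lemma mono_convex_1lip_lipschitz:
  assumes "1 \<le> a" "a \<le> b"
  shows "V b - V a \<le> b - a"
proof -
  have "(\<lambda>u. u - V u) a \<le> (\<lambda>u. u - V u) b"
  proof (rule deriv_nonneg_imp_mono [of a b _ "\<lambda>u. 1 - V' u"])
    fix x assume "x \<in> {a..b}"
    then show "((\<lambda>u. u - V u) has_real_derivative 1 - V' x) (at x)"
      and "0 \<le> 1 - V' x"
      using assms mono_convex_1lip_DERIV mono_convex_1lip_bounds [of x]
      by (auto intro!: derivative_eq_intros)
  qed (use assms in auto)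
  then show ?thesis
    by simp
qed

lemma mono_convex_1lip_secant:
  assumes "1 \<le> a" "a \<le> b"
  shows "V b - V a \<le> V' b * (b - a)"
proof -
  have "(\<lambda>u. V' b * u - V u) a \<le> (\<lambda>u. V' b * u - V u) b"
  proof (rule deriv_nonneg_imp_mono [of a b _ "\<lambda>u. V' b - V' u"])
    fix x assume "x \<in> {a..b}"
    then show "((\<lambda>u. V' b * u - V u) has_real_derivative V' b - V' x) (at x)"
      and "0 \<le> V' b - V' x"
      using assms mono_convex_1lip_DERIV mono_convex_1lip_deriv_mono [of x b]
      by (auto intro!: derivative_eq_intros)
  qed (use assms in auto)
  then show ?thesis
    by (simp add: algebra_simps)
qed

lemma recip_step_deriv_nonneg:
  assumes t: "1 \<le> t"
  shows "0 \<le> recip_step_deriv V V' t"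
proof -
  define c where "c = 1 + 1/t"
  have c: "1 \<le> c" "c \<le> t + 1"
    using recip_shift_bounds [OF t] by (simp_all add: c_def)
  have "V' c / (t^2 * (t + 1)) \<le> V' c / (t + 1)"
    using t mono_convex_1lip_bounds (1) [OF c(1)]
    by (intro divide_left_mono) (auto simp: one_le_power)
  also have "\<dots> \<le> V' (t + 1) / (t + 1)"
    using t mono_convex_1lip_deriv_mono [OF c] by (intro divide_right_mono) auto
  also have "\<dots> \<le> t * V' (t + 1) / (t + 1)"
    using t mono_convex_1lip_bounds (1) [of "t + 1"]
    by (intro divide_right_mono) (auto intro: mult_right_mono [of 1 t, simplified])
  finally have "V' c / (t^2 * (t + 1)) \<le> t * V' (t + 1) / (t + 1)" .
  moreover have "0 \<le> (V (t + 1) - V c) / (t + 1)^2"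
    using mono_convex_1lip_mono [OF c] by simp
  ultimately show ?thesis
    unfolding recip_step_deriv_def c_def [symmetric] by linarith
qed

lemma recip_step_deriv_le_one:
  assumes t: "1 \<le> t"
  shows "recip_step_deriv V V' t \<le> 1"
proof -
  define c where "c = 1 + 1/t"
  have c: "1 \<le> c" "c \<le> t + 1"
    using recip_shift_bounds [OF t] by (simp_all add: c_def)
  have "(V (t + 1) - V c) / (t + 1)^2 \<le> (t + 1) / (t + 1)^2"
    using t c mono_convex_1lip_lipschitz [OF c] by (intro divide_right_mono) auto
  also have "\<dots> = 1 / (t + 1)"
    using t by (simp add: power2_eq_square)
  finally have "(V (t + 1) - V c) / (t + 1)^2 \<le> 1 / (t + 1)" .
  moreover have "t * V' (t + 1) / (t + 1) \<le> t / (t + 1)"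
    using t mono_convex_1lip_bounds (2) [of "t + 1"] by (intro divide_right_mono) auto
  moreover have "0 \<le> V' c / (t^2 * (t + 1))"
    using t mono_convex_1lip_bounds (1) [OF c(1)] by simp
  moreover have "1 / (t + 1) + t / (t + 1) = 1"
    using t by (simp add: add_divide_distrib [symmetric])
  ultimately show ?thesis
    unfolding recip_step_deriv_def c_def [symmetric] by linarith
qed

lemma recip_step_deriv2_nonneg:
  assumes t: "1 \<le> t"
  shows "0 \<le> recip_step_deriv2 V V' V'' t"
proof -
  define c where "c = 1 + 1/t"
  have c: "1 \<le> c" "c \<le> t + 1"
    using recip_shift_bounds [OF t] by (simp_all add: c_def)
  have t1: "1 \<le> t + 1"
    using t by simp
  note bounds = mono_convex_1lip_bounds [OF c(1)] mono_convex_1lip_bounds [OF t1]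
  have "V (t + 1) - V c \<le> V' (t + 1) * (t + 1 - c)"
    by (rule mono_convex_1lip_secant [OF c])
  also have "\<dots> \<le> V' (t + 1) * (t + 1)"
    using bounds c by (intro mult_left_mono) auto
  finally have "2 * (V (t + 1) - V c) / (t + 1)^3 \<le> 2 * (V' (t + 1) * (t + 1)) / (t + 1)^3"
    using t by (intro divide_right_mono) auto
  also have "\<dots> = V' (t + 1) / (t + 1)^2 + V' (t + 1) / (t + 1)^2"
    using t by (simp add: power2_eq_square power3_eq_cube)
  also have "\<dots> \<le> (V' (t + 1) + V' c / t^2) / (t + 1)^2 + V' (t + 1) / (t + 1)^2"
    using bounds by (intro add_right_mono divide_right_mono) auto
  finally have "2 * (V (t + 1) - V c) / (t + 1)^3
      \<le> (V' (t + 1) + V' c / t^2) / (t + 1)^2 + V' (t + 1) / (t + 1)^2" .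
  moreover have "0 \<le> t * V'' (t + 1) / (t + 1)" "0 \<le> V'' c / (t^4 * (t + 1))"
    "0 \<le> V' c * (3 * t + 2) / (t^3 * (t + 1)^2)"
    using t bounds by auto
  ultimately show ?thesis
    unfolding recip_step_deriv2_def c_def [symmetric] by linarith
qed

lemma mono_convex_1lip_recip_step:
  "mono_convex_1lip (recip_step V) (recip_step_deriv V V') (recip_step_deriv2 V V' V'')"
  unfolding mono_convex_1lip_def
  using DERIV_recip_step [OF mono_convex_1lip_DERIV (1)]
    DERIV_recip_step_deriv [OF mono_convex_1lip_DERIV]
    recip_step_deriv_nonneg recip_step_deriv_le_one recip_step_deriv2_nonneg
  by auto

end

definition recip_sum :: "nat \<Rightarrow> real \<Rightarrow> real" where
  "recip_sum n = (recip_step ^^ n) (\<lambda>t. t + 1/t)"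

lemma mono_convex_1lip_recip_sum: "\<exists>V' V''. mono_convex_1lip (recip_sum n) V' V''"
proof (induction n)
  case 0
  have "\<forall>u>0. ((\<lambda>t. t + 1/t) has_real_derivative 1 - 1/u^2) (at u)
      \<and> ((\<lambda>t. 1 - 1/t^2) has_real_derivative 2/u^3) (at u)"
    by (auto intro!: derivative_eq_intros simp: field_simps power2_eq_square power3_eq_cube)
  moreover have "\<forall>u\<ge>1. 0 \<le> 1 - 1/u^2 \<and> 1 - 1/u^2 \<le> 1 \<and> 0 \<le> 2/(u::real)^3"
    by (auto simp: field_simps)
  ultimately have "mono_convex_1lip (\<lambda>t. t + 1/t) (\<lambda>t. 1 - 1/t^2) (\<lambda>t. 2/t^3)"
    unfolding mono_convex_1lip_def by blast
  then show ?case
    by (auto simp: recip_sum_def)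
next
  case (Suc n)
  then show ?case
    using mono_convex_1lip_recip_step unfolding recip_sum_def by fastforce
qed

lemma recip_sum_bounds:
  assumes "1 \<le> t"
  shows "recip_sum n 1 \<le> recip_sum n t" "recip_sum n t - recip_sum n 1 \<le> t - 1"
  using mono_convex_1lip_recip_sum [of n] mono_convex_1lip_mono [of _ _ _ 1 t]
    mono_convex_1lip_lipschitz [of _ _ _ 1 t] assms
  by auto

definition farey_sum :: "nat \<Rightarrow> real \<Rightarrow> real" where
  "farey_sum n x = (\<Sum>k=0..n. (farey_transfer ^^ k) phi0 x)"

lemma farey_sum_Suc: "farey_sum (Suc n) x = x + farey_transfer (farey_sum n) x"
proof -
  have "farey_sum (Suc n) x = phi0 x + (\<Sum>k=0..n. farey_transfer ((farey_transfer ^^ k) phi0) x)"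
    unfolding farey_sum_def by (simp only: sum.atLeast0_atMost_Suc_shift funpow.simps comp_def id_apply)
  also have "(\<Sum>k=0..n. farey_transfer ((farey_transfer ^^ k) phi0) x) = farey_transfer (farey_sum n) x"
    by (simp add: farey_transfer_def farey_sum_def sum_divide_distrib sum.distrib sum_distrib_left
        add_divide_distrib)
  finally show ?thesis
    by (simp add: phi0_def)
qed

lemma farey_sum_eq_recip_sum:
  assumes "x > 0"
  shows "farey_sum n x = recip_sum n (1/x) - 1/x"
  using assms
proof (induction n arbitrary: x)
  case 0
  then show ?case
    by (simp add: farey_sum_def recip_sum_def phi0_def)
next
  case (Suc n x)
  let ?W = "recip_sum n"
  have "1 / (x / (1 + x)) = 1 + 1/x"
    using Suc.prems by (simp add: field_simps)
  then have IH: "farey_sum n (x / (1 + x)) = ?W (1 + 1/x) - (1 + 1/x)"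
    "farey_sum n (1 / (1 + x)) = ?W (1 + x) - (1 + x)"
    using Suc.IH [of "x / (1 + x)"] Suc.IH [of "1 / (1 + x)"] Suc.prems by auto
  have "farey_sum (Suc n) x
      = x + (?W (1 + 1/x) - (1 + 1/x) + x * (?W (1 + x) - (1 + x))) / (1 + x)"
    by (simp only: farey_sum_Suc farey_transfer_def IH)
  also have "\<dots> = (1/x * ?W (1 + 1/x) + ?W (1 + x)) / (1/x + 1) - 1/x"
  proof -
    have "x + (a - (1 + 1/x) + x * (b - (1 + x))) / (1 + x) = (1/x * a + b) / (1/x + 1) - 1/x"
      for a b
      using Suc.prems by (simp add: divide_simps) (simp add: algebra_simps)
    then show ?thesis .
  qed
  also have "\<dots> = recip_sum (Suc n) (1/x) - 1/x"
    by (simp add: recip_sum_def recip_step_def add.commute)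
  finally show ?case .
qed

lemma farey_sum_bounds:
  assumes "0 < x" "x \<le> 1"
  shows "recip_sum n 1 - 1/x \<le> farey_sum n x" "farey_sum n x \<le> recip_sum n 1 - 1"
  using recip_sum_bounds [of "1/x" n] assms by (auto simp: farey_sum_eq_recip_sum)

lemma farey_measurable [measurable]: "farey \<in> borel_measurable borel"
  unfolding farey_def [abs_def] by measurable

lemma farey_funpow_measurable [measurable]: "(farey ^^ k) \<in> borel_measurable borel"
  by (induction k) (simp_all add: measurable_compose [OF _ farey_measurable])

lemma farey_in_unit: "x \<in> {0..1} \<Longrightarrow> farey x \<in> {0..1}"
  by (auto simp: farey_def field_simps)

lemma farey_funpow_in_unit: "x \<in> {0..1} \<Longrightarrow> (farey ^^ k) x \<in> {0..1}"
  by (induction k) (auto simp del: atLeastAtMost_iff intro: farey_in_unit)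

lemma farey_branch_bounds:
  fixes \<alpha> \<beta> :: real
  assumes "0 \<le> \<alpha>" "\<alpha> \<le> \<beta>" "\<beta> \<le> 1"
  shows "0 \<le> \<alpha>/(1+\<alpha>)" "\<alpha>/(1+\<alpha>) \<le> \<beta>/(1+\<beta>)" "\<beta>/(1+\<beta>) \<le> 1/2"
    and "1/2 \<le> 1/(1+\<beta>)" "1/(1+\<beta>) \<le> 1/(1+\<alpha>)" "1/(1+\<alpha>) \<le> 1"
  using assms by (auto simp: field_simps)

lemma farey_mem_Icc_iff:
  fixes y \<alpha> \<beta> :: real
  assumes "y \<in> {0..1}" "0 \<le> \<alpha>" "\<alpha> \<le> \<beta>" "\<beta> \<le> 1"
  shows "farey y \<in> {\<alpha>..\<beta>} \<longleftrightarrow> y \<in> {\<alpha>/(1+\<alpha>)..\<beta>/(1+\<beta>)} \<or> y \<in> {1/(1+\<beta>)..1/(1+\<alpha>)}"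
proof (cases y "1/2 :: real" rule: linorder_cases)
  case less
  moreover have "\<beta> * y \<le> y"
    using assms by (simp add: mult_left_le_one_le)
  ultimately show ?thesis
    using assms by (auto simp: farey_def field_simps)
next
  case equal
  show ?thesis
    using assms unfolding equal by (auto simp: farey_def field_simps)
next
  case greater
  moreover have "\<alpha> * y \<le> \<beta> * y"
    by (rule mult_right_mono) (use assms in auto)
  moreover have "\<beta> * (1/2) \<le> \<beta> * y"
    by (rule mult_left_mono) (use assms greater in auto)
  ultimately show ?thesis
    using assms by (auto simp: farey_def field_simps)
qed

definition farey_transfer_lebesgue :: "(real \<Rightarrow> real) \<Rightarrow> real \<Rightarrow> real" where
  "farey_transfer_lebesgue p y = (p (y / (1 + y)) + p (1 / (1 + y))) / (1 + y)^2"

definition farey_pushforward_density :: "nat \<Rightarrow> real \<Rightarrow> real" where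
  "farey_pushforward_density k = (farey_transfer_lebesgue ^^ k) (\<lambda>_. 1)"

lemma continuous_on_farey_transfer_lebesgue:
  assumes "continuous_on {0..1} p"
  shows "continuous_on {0..1} (farey_transfer_lebesgue p)"
proof -
  have "continuous_on {0..1} (\<lambda>y::real. p (y / (1 + y)))"
    "continuous_on {0..1} (\<lambda>y::real. p (1 / (1 + y)))"
    by (auto intro!: continuous_on_compose2 [OF assms] continuous_intros simp: field_simps)
  then show ?thesis
    unfolding farey_transfer_lebesgue_def [abs_def] by (intro continuous_intros) auto
qed

lemma continuous_on_farey_pushforward_density:
  "continuous_on {0..1} (farey_pushforward_density k)"
  by (induction k)
    (simp_all add: farey_pushforward_density_def continuous_on_farey_transfer_lebesgue)

lemma has_integral_farey_left_branch:
  fixes p :: "real \<Rightarrow> real"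
  assumes p: "continuous_on {0..1} p" and ab: "0 \<le> \<alpha>" "\<alpha> \<le> \<beta>" "\<beta> \<le> 1"
  shows "((\<lambda>y. p (y / (1 + y)) / (1 + y)^2) has_integral integral {\<alpha>/(1+\<alpha>)..\<beta>/(1+\<beta>)} p) {\<alpha>..\<beta>}"
proof -
  note bounds = farey_branch_bounds [OF ab]
  have "((\<lambda>y. (1 / (1 + y)^2) *\<^sub>R p (y / (1 + y))) has_integral
      integral {\<alpha>/(1+\<alpha>)..\<beta>/(1+\<beta>)} p) {\<alpha>..\<beta>}"
  proof (rule has_integral_substitution_strong
      [where s = "{}" and g = "\<lambda>y. y / (1 + y)" and g' = "\<lambda>y. 1 / (1 + y)^2" and c = 0 and d = 1])
    show "(\<lambda>y. y / (1 + y)) ` {\<alpha>..\<beta>} \<subseteq> {0..1}"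
      using ab by (auto simp: field_simps)
    show "continuous_on {\<alpha>..\<beta>} (\<lambda>y. y / (1 + y))"
      using ab by (auto intro!: continuous_intros)
    fix x assume "x \<in> {\<alpha>..\<beta>} - {}"
    then have "1 + x \<noteq> 0"
      using ab by auto
    then show "((\<lambda>y. y / (1 + y)) has_field_derivative 1 / (1 + x)^2) (at x within {\<alpha>..\<beta>})"
      by (auto intro!: derivative_eq_intros simp: field_simps power2_eq_square)
  qed (use ab bounds p in simp_all)
  then show ?thesis
    by simp
qed

lemma has_integral_farey_right_branch:
  fixes p :: "real \<Rightarrow> real"
  assumes p: "continuous_on {0..1} p" and ab: "0 \<le> \<alpha>" "\<alpha> \<le> \<beta>" "\<beta> \<le> 1"
  shows "((\<lambda>y. p (1 / (1 + y)) / (1 + y)^2) has_integral integral {1/(1+\<beta>)..1/(1+\<alpha>)} p) {\<alpha>..\<beta>}"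
proof -
  have "((\<lambda>y. (-1 / (1 + y)^2) *\<^sub>R p (1 / (1 + y))) has_integral
      integral {1/(1+\<alpha>)..1/(1+\<beta>)} p - integral {1/(1+\<beta>)..1/(1+\<alpha>)} p) {\<alpha>..\<beta>}"
  proof (rule has_integral_substitution_general
      [where s = "{}" and g = "\<lambda>y. 1 / (1 + y)" and g' = "\<lambda>y. -1 / (1 + y)^2" and c = 0 and d = 1])
    show "(\<lambda>y. 1 / (1 + y)) ` {\<alpha>..\<beta>} \<subseteq> {0..1}"
      using ab by (auto simp: field_simps)
    show "continuous_on {\<alpha>..\<beta>} (\<lambda>y. 1 / (1 + y))"
      using ab by (auto intro!: continuous_intros)
    fix x assume "x \<in> {\<alpha>..\<beta>} - {}"
    then have "1 + x \<noteq> 0"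
      using ab by auto
    then show "((\<lambda>y. 1 / (1 + y)) has_field_derivative -1 / (1 + x)^2) (at x within {\<alpha>..\<beta>})"
      by (auto intro!: derivative_eq_intros simp: field_simps power2_eq_square)
  qed (use ab p in simp_all)
  moreover have "integral {1/(1+\<alpha>)..1/(1+\<beta>)} p = 0"
  proof (cases "\<alpha> = \<beta>")
    case False
    then have "1/(1+\<beta>) < 1/(1+\<alpha>)"
      using ab by (auto simp: field_simps)
    then show ?thesis
      by simp
  qed simp
  ultimately have "((\<lambda>y. (-1 / (1 + y)^2) * p (1 / (1 + y))) has_integral
      - integral {1/(1+\<beta>)..1/(1+\<alpha>)} p) {\<alpha>..\<beta>}"
    by simp
  from has_integral_neg [OF this] show ?thesis
    by simp
qed

lemma measure_farey_preimage_Icc: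
  assumes "0 \<le> \<alpha>" "\<alpha> \<le> \<beta>" "\<beta> \<le> 1"
  shows "measure lborel {x \<in> {0..1}. (farey ^^ k) x \<in> {\<alpha>..\<beta>}}
    = integral {\<alpha>..\<beta>} (farey_pushforward_density k)"
  using assms
proof (induction k arbitrary: \<alpha> \<beta>)
  case 0
  then have "{x \<in> {0..1}. (farey ^^ 0) x \<in> {\<alpha>..\<beta>}} = {\<alpha>..\<beta>}"
    by auto
  then show ?case
    using 0 by (simp add: farey_pushforward_density_def)
next
  case (Suc k)
  define S where "S a b = {x \<in> {0..1}. (farey ^^ k) x \<in> {a..b::real}}" for a b
  have S_fmeasurable: "S a b \<in> fmeasurable lborel" for a b
    unfolding S_def by (rule fmeasurableI2 [of "{0..1}"]) (auto simp: fmeasurable_def, measurable)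
  note bounds = farey_branch_bounds [OF Suc.prems]
  have "{x \<in> {0..1}. (farey ^^ Suc k) x \<in> {\<alpha>..\<beta>}}
      = S (\<alpha>/(1+\<alpha>)) (\<beta>/(1+\<beta>)) \<union> S (1/(1+\<beta>)) (1/(1+\<alpha>))"
    using farey_mem_Icc_iff [OF farey_funpow_in_unit Suc.prems] by (auto simp: S_def)
  moreover have "measure lborel (S (\<alpha>/(1+\<alpha>)) (\<beta>/(1+\<beta>)) \<inter> S (1/(1+\<beta>)) (1/(1+\<alpha>))) = 0"
  proof -
    have "S (\<alpha>/(1+\<alpha>)) (\<beta>/(1+\<beta>)) \<inter> S (1/(1+\<beta>)) (1/(1+\<alpha>)) \<subseteq> S (1/2) (1/2)"
      unfolding S_def Int_iff mem_Collect_eq atLeastAtMost_iff subset_iff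
      using bounds(3,4) by (meson order.antisym order.trans)
    then have "measure lborel (S (\<alpha>/(1+\<alpha>)) (\<beta>/(1+\<beta>)) \<inter> S (1/(1+\<beta>)) (1/(1+\<alpha>)))
        \<le> measure lborel (S (1/2) (1/2))"
      by (rule measure_mono_fmeasurable) (intro fmeasurableD fmeasurable.Int S_fmeasurable)+
    moreover have "measure lborel (S (1/2) (1/2)) = 0"
      using Suc.IH [of "1/2" "1/2"] by (simp add: S_def)
    ultimately show ?thesis
      using measure_nonneg by (metis order.antisym)
  qed
  ultimately have "measure lborel {x \<in> {0..1}. (farey ^^ Suc k) x \<in> {\<alpha>..\<beta>}}
      = measure lborel (S (\<alpha>/(1+\<alpha>)) (\<beta>/(1+\<beta>))) + measure lborel (S (1/(1+\<beta>)) (1/(1+\<alpha>)))"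
    using measure_Un3 [OF S_fmeasurable S_fmeasurable] by simp
  also have "\<dots> = integral {\<alpha>/(1+\<alpha>)..\<beta>/(1+\<beta>)} (farey_pushforward_density k)
      + integral {1/(1+\<beta>)..1/(1+\<alpha>)} (farey_pushforward_density k)"
  proof -
    have "\<beta>/(1+\<beta>) \<le> 1" "0 \<le> 1/(1+\<beta>)"
      using bounds(3,4) by linarith+
    then show ?thesis
      using Suc.IH [OF bounds(1,2)] Suc.IH [OF _ bounds(5,6)] by (simp add: S_def)
  qed
  also have "\<dots> = integral {\<alpha>..\<beta>} (farey_pushforward_density (Suc k))"
  proof (rule integral_unique [symmetric])
    have "farey_pushforward_density (Suc k) = (\<lambda>y.
        farey_pushforward_density k (y / (1 + y)) / (1 + y)^2
        + farey_pushforward_density k (1 / (1 + y)) / (1 + y)^2)"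
      by (simp add: fun_eq_iff farey_pushforward_density_def farey_transfer_lebesgue_def
          add_divide_distrib)
    then show "(farey_pushforward_density (Suc k) has_integral
        integral {\<alpha>/(1+\<alpha>)..\<beta>/(1+\<beta>)} (farey_pushforward_density k)
        + integral {1/(1+\<beta>)..1/(1+\<alpha>)} (farey_pushforward_density k)) {\<alpha>..\<beta>}"
      using has_integral_add [OF
          has_integral_farey_left_branch [OF continuous_on_farey_pushforward_density Suc.prems]
          has_integral_farey_right_branch [OF continuous_on_farey_pushforward_density Suc.prems]]
      by simp
  qed
  finally show ?case .
qed

lemma farey_transfer_funpow_phi0:
  assumes "x \<ge> 0"
  shows "(farey_transfer ^^ k) phi0 x = x * farey_pushforward_density k x"
  using assms
proof (induction k arbitrary: x)
  case 0
  then show ?case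
    by (simp add: phi0_def farey_pushforward_density_def)
next
  case (Suc k)
  have "(farey_transfer ^^ Suc k) phi0 x
      = (x / (1 + x) * farey_pushforward_density k (x / (1 + x))
        + x * (1 / (1 + x) * farey_pushforward_density k (1 / (1 + x)))) / (1 + x)"
    using Suc.prems by (simp add: farey_transfer_def Suc.IH)
  also have "\<dots> = x * farey_pushforward_density (Suc k) x"
  proof -
    have "(x / (1 + x) * a + x * (1 / (1 + x) * b)) / (1 + x) = x * ((a + b) / (1 + x)^2)" for a b
      using Suc.prems by (simp add: divide_simps) (simp add: algebra_simps power2_eq_square)
    then show ?thesis
      by (simp add: farey_pushforward_density_def farey_transfer_lebesgue_def)
  qed
  finally show ?case .
qed

lemma farey_sum_eq_density_sum:
  assumes "x \<ge> 0"
  shows "farey_sum n x = x * (\<Sum>k=0..n. farey_pushforward_density k x)"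
  using assms by (simp add: farey_sum_def farey_transfer_funpow_phi0 sum_distrib_left)

lemma a_sigma_eq_integral:
  assumes "N \<ge> 2"
  shows "a_sigma N \<sigma> =
    integral {1 / real N..1} (\<lambda>y. \<Sum>k=0..nat \<lfloor>\<sigma>\<rfloor>. farey_pushforward_density k y) / ln (real N)"
proof -
  have "0 \<le> 1 / real N" "1 / real N \<le> 1"
    using assms by auto
  then have "measure lborel {x \<in> {0..1}. (farey ^^ k) x \<in> {1 / real N..1}}
      = integral {1 / real N..1} (farey_pushforward_density k)" for k
    by (intro measure_farey_preimage_Icc) auto
  moreover have "farey_pushforward_density k integrable_on {1 / real N..1}" for k
    by (intro integrable_continuous_real continuous_on_subset [OF continuous_on_farey_pushforward_density])
      (use \<open>0 \<le> 1 / real N\<close> in auto)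
  ultimately show ?thesis
    unfolding a_sigma_def by (simp add: integral_sum)
qed

lemma has_integral_divide_ident:
  fixes a b c :: real
  assumes "0 < a" "a \<le> b"
  shows "((\<lambda>y. c / y) has_integral c * ln (b / a)) {a..b}"
proof -
  have "((\<lambda>y. c / y) has_integral c * ln b - c * ln a) {a..b}"
  proof (rule fundamental_theorem_of_calculus)
    fix y assume "y \<in> {a..b}"
    then have "y > 0"
      using assms by auto
    then show "((\<lambda>y. c * ln y) has_vector_derivative c / y) (at y within {a..b})"
      by (auto intro!: derivative_eq_intros simp: has_real_derivative_iff_has_vector_derivative [symmetric])
  qed (use assms in auto)
  then show ?thesis
    using assms by (simp add: ln_div algebra_simps)
qed

lemma log_average_bounds:
  fixes a b m M :: real
  assumes "0 < a" "a < b" and g: "g integrable_on {a..b}"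
    and bounds: "\<And>y. y \<in> {a..b} \<Longrightarrow> m \<le> y * g y \<and> y * g y \<le> M"
  shows "m \<le> integral {a..b} g / ln (b / a)" "integral {a..b} g / ln (b / a) \<le> M"
proof -
  have ln_pos: "0 < ln (b / a)"
    using assms by simp
  have "m * ln (b / a) \<le> integral {a..b} g"
  proof (rule has_integral_le [OF has_integral_divide_ident integrable_integral [OF g]])
    fix y assume "y \<in> {a..b}"
    with assms bounds [of y] show "m / y \<le> g y"
      by (simp add: divide_le_eq mult.commute)
  qed (use assms in auto)
  moreover have "integral {a..b} g \<le> M * ln (b / a)"
  proof (rule has_integral_le [OF integrable_integral [OF g] has_integral_divide_ident])
    fix y assume "y \<in> {a..b}"
    with assms bounds [of y] show "g y \<le> M / y"
      by (simp add: le_divide_eq mult.commute)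
  qed (use assms in auto)
  ultimately show "m \<le> integral {a..b} g / ln (b / a)" "integral {a..b} g / ln (b / a) \<le> M"
    using ln_pos by (simp_all add: le_divide_eq divide_le_eq)
qed

lemma a_sigma_bounds:
  assumes "N \<ge> 2"
    and bounds: "\<And>y. y \<in> {1 / real N..1} \<Longrightarrow> m \<le> farey_sum (nat \<lfloor>\<sigma>\<rfloor>) y \<and> farey_sum (nat \<lfloor>\<sigma>\<rfloor>) y \<le> M"
  shows "m \<le> a_sigma N \<sigma> \<and> a_sigma N \<sigma> \<le> M"
proof -
  define n where "n = nat \<lfloor>\<sigma>\<rfloor>"
  have "1 / real N < 1"
    using assms(1) by simp
  moreover have "(\<lambda>y. \<Sum>k=0..n. farey_pushforward_density k y) integrable_on {1 / real N..1}"
    by (intro integrable_sum integrable_continuous_real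
        continuous_on_subset [OF continuous_on_farey_pushforward_density]) auto
  moreover have "m \<le> y * (\<Sum>k=0..n. farey_pushforward_density k y)
      \<and> y * (\<Sum>k=0..n. farey_pushforward_density k y) \<le> M"
    if "y \<in> {1 / real N..1}" for y
    using bounds [OF that] farey_sum_eq_density_sum [of y n] that order_trans [of 0 "1 / real N" y]
    by (auto simp: n_def)
  ultimately show ?thesis
    using log_average_bounds [where a = "1 / real N" and b = 1 and m = m and M = M
        and g = "\<lambda>y. \<Sum>k=0..n. farey_pushforward_density k y"]
      a_sigma_eq_integral [OF assms(1), of \<sigma>] assms(1)
    unfolding n_def by simp
qed

theorem lemma1:
  fixes N :: nat and \<sigma> x :: real
  assumes "N \<ge> 2" and "\<sigma> \<ge> 0" and "x \<in> {1 / real N..1}"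
  shows "\<bar>(\<Sum>k=0..nat \<lfloor>\<sigma>\<rfloor>. (farey_transfer ^^ k) phi0 x) - a_sigma N \<sigma>\<bar>
           \<le> real N * (real N - 1) / 2"
proof -
  \<comment> \<open>The sign of \<open>\<sigma>\<close> is irrelevant: only \<open>nat \<lfloor>\<sigma>\<rfloor>\<close> enters.\<close>
  define n where "n = nat \<lfloor>\<sigma>\<rfloor>"
  define c where "c = recip_sum n 1"
  have sum_bounds: "c - real N \<le> farey_sum n y \<and> farey_sum n y \<le> c - 1"
    if "y \<in> {1 / real N..1}" for y
  proof -
    have "0 < y" "1 / y \<le> real N"
      using that assms(1) by (auto simp: divide_le_eq mult.commute order.strict_trans2 [of 0 "1 / real N"])
    then show ?thesis
      using farey_sum_bounds [of y n] that unfolding c_def by auto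
  qed
  have "c - real N \<le> a_sigma N \<sigma> \<and> a_sigma N \<sigma> \<le> c - 1"
    using a_sigma_bounds [of N "c - real N" \<sigma> "c - 1"] sum_bounds assms(1) unfolding n_def by blast
  moreover have "real N - 1 \<le> real N * (real N - 1) / 2"
  proof -
    have "0 \<le> (real N - 1) * (real N - 2)"
      using assms(1) by (intro mult_nonneg_nonneg) auto
    then show ?thesis
      by (simp add: field_simps algebra_simps)
  qed
  ultimately show ?thesis
    using sum_bounds [OF assms(3)] unfolding farey_sum_def n_def by linarith
qed

end
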